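(* Let $\rho=(r_n)_n$ be an increasing sequence in $[0,1)$ with $r_n\to 1$. For any $f\in\mathcal{U}_A(\mathbb{D},\rho)$ there exists $g\in W$ such that $S_n(f+g)(z)\to\infty$ for $\lambda$-almost every $z\in\mathbb{C}\setminus\overline{\mathbb{D}}$, while $f+g\in\mathcal{U}_A(\mathbb{D},\rho)$.
   Context: $\mathbb{D}$ is the open unit disc, $\mathbb{T}$ the unit circle, $\lambda$ Lebesgue measure on $\mathbb{C}$. $W$ is the Wiener algebra of power series $\sum_k c_kz^k$ with $\sum_k|c_k|<\infty$. For $f(z)=\sum_k a_kz^k\in H(\mathbb{D})$, $S_n(f)(z)=\sum_{k=0}^na_kz^k$. For $f\in H(\mathbb{D})$, $f_r(z):=f(rz)$; $\mathcal{U}_A(\mathbb{D},\rho)$ is the set of $f\in H(\mathbb{D})$ such that for every compact $K\subset\mathbb{T}$, $K\neq\mathbb{T}$, and every continuous $\varphi$ on $K$ there is an increasing sequence $(n_k)$ with $\sup_{\zeta\in K}|f_{r_{n_k}}(\zeta)-\varphi(\zeta)|\to0$. *)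

theory Defs
  imports "HOL-Analysis.Analysis"
begin

definition taylor_coeff :: "(complex \<Rightarrow> complex) \<Rightarrow> nat \<Rightarrow> complex" where
  "taylor_coeff f k = (deriv ^^ k) f 0 / of_nat (fact k)"

definition partial_sum :: "(complex \<Rightarrow> complex) \<Rightarrow> nat \<Rightarrow> complex \<Rightarrow> complex" where
  "partial_sum f n z = (\<Sum>k\<le>n. taylor_coeff f k * z ^ k)"

definition wiener_coeffs :: "(nat \<Rightarrow> complex) set" where
  "wiener_coeffs = {c. summable (\<lambda>k. norm (c k))}"

definition wiener_fun :: "(nat \<Rightarrow> complex) \<Rightarrow> complex \<Rightarrow> complex" where
  "wiener_fun c z = (\<Sum>k. c k * z ^ k)"

definition U_A :: "(nat \<Rightarrow> real) \<Rightarrow> (complex \<Rightarrow> complex) set" where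
  "U_A \<rho> = {f. f holomorphic_on ball 0 1 \<and>
      (\<forall>K \<phi>. compact K \<and> K \<subseteq> sphere 0 1 \<and> K \<noteq> sphere 0 1 \<and> continuous_on K \<phi> \<longrightarrow>
         (\<exists>n::nat \<Rightarrow> nat. strict_mono n \<and>
            uniform_limit K (\<lambda>j \<zeta>. f (complex_of_real (\<rho> (n j)) * \<zeta>)) \<phi> sequentially))}"

end

theory Submission
  imports Defs "HOL-Complex_Analysis.Complex_Analysis" "HOL-Real_Asymp.Real_Asymp"
begin

text \<open>The perturbation \<open>c\<close> is chosen one coefficient at a time. Once \<open>c\<^sub>0, ..., c\<^sub>n\<^sub>-\<^sub>1\<close> are
  fixed, the candidates \<open>c\<^sub>n = j \<delta>\<^sub>n\<close> with \<open>j < N\<^sub>n\<close> give pairwise disjoint sets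
  \<open>{z \<in> ball 0 n. \<delta>\<^sub>n |z|\<^sup>n > 2n, |S\<^sub>n(f + g)(z)| \<le> n}\<close>, because two candidates change
  \<open>S\<^sub>n(z)\<close> by at least \<open>\<delta>\<^sub>n |z|\<^sup>n\<close>; hence one of them has measure at most \<open>\<pi> n\<^sup>2 / N\<^sub>n\<close>.
  These measures are summable, so by Borel--Cantelli almost every \<open>z\<close> with \<open>|z| > 1\<close> lies in
  only finitely many of the chosen sets, and as \<open>\<delta>\<^sub>n |z|\<^sup>n\<close> eventually exceeds \<open>2n\<close>, we get
  \<open>|S\<^sub>n(f + g)(z)| > n\<close> for all large \<open>n\<close>.
  Adding \<open>g\<close> preserves \<open>U\<^sub>A\<close> because \<open>g\<close> is continuous on the closed disc, so
  \<open>g(r \<zeta>) \<rightarrow> g(\<zeta>)\<close> uniformly as \<open>r \<rightarrow> 1\<close>.\<close>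

lemma dependent_nat_choice_prefix:
  fixes P :: "(nat \<Rightarrow> 'a) \<Rightarrow> nat \<Rightarrow> 'a \<Rightarrow> bool"
  assumes prefix_determined: "\<And>c c' n x. (\<And>k. k < n \<Longrightarrow> c k = c' k) \<Longrightarrow> P c n x \<Longrightarrow> P c' n x"
    and step: "\<And>c n. \<exists>x. P c n x"
  shows "\<exists>c. \<forall>n. P c n (c n)"
proof -
  obtain f where f: "\<And>n. (\<forall>m<n. P (f n) m (f n m)) \<and> (\<forall>k<n. f (Suc n) k = f n k)"
  proof (atomize_elim, rule dependent_nat_choice)
    fix d n assume prefix: "\<forall>m<n. P d m (d m)"
    obtain x where x: "P d n x" using step by blast
    have "P (d(n := x)) m ((d(n := x)) m)" if "m < Suc n" for m
    proof (cases "m = n")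
      case True
      have "P (d(n := x)) n x"
        by (rule prefix_determined[OF _ x]) simp
      with True show ?thesis by simp
    next
      case False
      with that prefix have "P d m (d m)" by simp
      then have "P (d(n := x)) m (d m)"
        by (rule prefix_determined[rotated]) (use that in auto)
      with False show ?thesis by simp
    qed
    then show "\<exists>d'. (\<forall>m<Suc n. P d' m (d' m)) \<and> (\<forall>k<n. d' k = d k)"
      by (intro exI[of _ "d(n := x)"]) auto
  qed simp
  define c where "c k = f (Suc k) k" for k
  have f_c: "f m k = c k" if "k < m" for m k
    using that
  proof (induction m)
    case (Suc m)
    then show ?case using f[of m] by (cases "k = m") (auto simp: c_def)
  qed simp
  have "P c n (c n)" for n
  proof -
    have "P (f (Suc n)) n (c n)"
      using f[of "Suc n"] by (simp add: c_def)
    then show ?thesis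
      by (rule prefix_determined[rotated]) (simp add: f_c)
  qed
  then show ?thesis by blast
qed

lemma disjoint_family_ex_measure_le_div:
  fixes N :: nat
  assumes "disjoint_family_on A {..<N}" and "0 < N"
    and "\<And>j. j < N \<Longrightarrow> A j \<in> sets M" and "\<And>j. j < N \<Longrightarrow> A j \<subseteq> S"
    and "S \<in> fmeasurable M"
  shows "\<exists>j<N. measure M (A j) \<le> measure M S / N"
proof (rule ccontr)
  assume "\<not> ?thesis"
  then have "(\<Sum>j<N. measure M S / N) < (\<Sum>j<N. measure M (A j))"
    using \<open>0 < N\<close> by (intro sum_strict_mono) auto
  then have "measure M S < (\<Sum>j<N. measure M (A j))"
    using \<open>0 < N\<close> by simp
  also have "\<dots> = measure M (\<Union>j<N. A j)"
  proof (rule measure_finite_Union[symmetric])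
    show "A ` {..<N} \<subseteq> sets M" using assms(3) by blast
    show "emeasure M (A j) \<noteq> \<infinity>" if "j \<in> {..<N}" for j
      using fmeasurableI2[OF assms(5) assms(4)] assms(3) that by (simp add: fmeasurable_def less_top)
  qed (use assms(1) in auto)
  also have "\<dots> \<le> measure M S"
    using assms(3-5) by (intro measure_mono_fmeasurable) auto
  finally show False by simp
qed

definition small_value_set :: "(complex \<Rightarrow> complex) \<Rightarrow> real \<Rightarrow> nat \<Rightarrow> complex set" where
  "small_value_set p \<delta> n =
     {z. norm z < n \<and> 2 * real n < \<delta> * norm z ^ n \<and> norm (p z) \<le> n}"

lemma small_value_set_subset_ball: "small_value_set p \<delta> n \<subseteq> ball 0 n"
  unfolding small_value_set_def by auto

lemma emeasure_small_value_set_finite: "emeasure lborel (small_value_set p \<delta> n) < \<infinity>"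
proof -
  have "emeasure lborel (small_value_set p \<delta> n) \<le> emeasure lborel (ball (0::complex) n)"
    by (rule emeasure_mono[OF small_value_set_subset_ball]) simp
  also have "\<dots> < \<infinity>"
    by (rule emeasure_bounded_finite) simp
  finally show ?thesis .
qed

lemma small_value_set_measurable:
  "continuous_on UNIV p \<Longrightarrow> small_value_set p \<delta> n \<in> sets lborel"
  unfolding small_value_set_def sets_lborel Collect_conj_eq
  by (intro sets.Int borel_open borel_closed open_Collect_less closed_Collect_le continuous_intros)
     (auto intro: continuous_on_subset)

lemma small_value_set_disjoint:
  fixes i j :: nat
  assumes "0 \<le> \<delta>" and "i \<noteq> j"
  shows "small_value_set (\<lambda>z. q z + of_real (real i * \<delta>) * z ^ n) \<delta> n \<inter>
         small_value_set (\<lambda>z. q z + of_real (real j * \<delta>) * z ^ n) \<delta> n = {}"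
proof (rule equals0I)
  fix z
  assume "z \<in> small_value_set (\<lambda>z. q z + of_real (real i * \<delta>) * z ^ n) \<delta> n \<inter>
             small_value_set (\<lambda>z. q z + of_real (real j * \<delta>) * z ^ n) \<delta> n"
  then have i: "norm (q z + of_real (real i * \<delta>) * z ^ n) \<le> n"
    and j: "norm (q z + of_real (real j * \<delta>) * z ^ n) \<le> n"
    and large: "2 * real n < \<delta> * norm z ^ n"
    unfolding small_value_set_def by auto
  have "\<delta> * norm z ^ n \<le> \<bar>real i - real j\<bar> * (\<delta> * norm z ^ n)"
    using \<open>i \<noteq> j\<close> \<open>0 \<le> \<delta>\<close> mult_right_mono[of 1 "\<bar>real i - real j\<bar>" "\<delta> * norm z ^ n"]
    by auto
  also have "\<dots> = norm (of_real ((real i - real j) * \<delta>) * z ^ n)"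
    by (simp only: norm_mult norm_of_real norm_power abs_mult abs_of_nonneg[OF \<open>0 \<le> \<delta>\<close>] mult.assoc)
  also have "\<dots> = norm ((q z + of_real (real i * \<delta>) * z ^ n) - (q z + of_real (real j * \<delta>) * z ^ n))"
    by (simp add: algebra_simps)
  also have "\<dots> \<le> 2 * real n"
    using norm_triangle_ineq4[of "q z + of_real (real i * \<delta>) * z ^ n" "q z + of_real (real j * \<delta>) * z ^ n"] i j
    by linarith
  finally show False using large by simp
qed

lemma ex_shift_measure_small_value_set_le:
  fixes N :: nat
  assumes "continuous_on UNIV q" and "0 \<le> \<delta>" and "0 < N"
  shows "\<exists>j<N. measure lborel (small_value_set (\<lambda>z. q z + of_real (real j * \<delta>) * z ^ n) \<delta> n)
                 \<le> pi * n^2 / N"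
proof -
  have "\<exists>j<N. measure lborel (small_value_set (\<lambda>z. q z + of_real (real j * \<delta>) * z ^ n) \<delta> n)
                 \<le> measure lborel (ball (0::complex) n) / N"
  proof (rule disjoint_family_ex_measure_le_div)
    show "disjoint_family_on (\<lambda>j. small_value_set (\<lambda>z. q z + of_real (real j * \<delta>) * z ^ n) \<delta> n) {..<N}"
      using small_value_set_disjoint[OF \<open>0 \<le> \<delta>\<close>] by (auto simp: disjoint_family_on_def)
    show "small_value_set (\<lambda>z. q z + of_real (real j * \<delta>) * z ^ n) \<delta> n \<in> sets lborel" for j
      using assms(1) by (intro small_value_set_measurable continuous_intros)
  qed (use assms small_value_set_subset_ball in \<open>auto intro!: fmeasurableI emeasure_bounded_finite\<close>)
  then show ?thesis
    by (simp add: content_ball unit_ball_vol_2)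
qed

lemma summable_inverse_Suc_power2: "summable (\<lambda>n. 1 / (real n + 1) ^ 2)"
proof -
  have "summable (\<lambda>n. inverse (real n ^ 2))"
    by (rule inverse_power_summable) simp
  then have "summable (\<lambda>n. inverse (real (Suc n) ^ 2))"
    by (subst summable_Suc_iff)
  then show ?thesis
    by (simp add: inverse_eq_divide add.commute)
qed

lemma ex_coeffs_measure_small_value_sets_le:
  fixes a :: "nat \<Rightarrow> complex" and \<delta> :: "nat \<Rightarrow> real" and N :: "nat \<Rightarrow> nat"
  assumes "\<And>n. 0 \<le> \<delta> n" and "\<And>n. 0 < N n"
  obtains c where "\<And>n. \<exists>j<N n. c n = of_real (real j * \<delta> n)"
    and "\<And>n. measure lborel (small_value_set (\<lambda>z. \<Sum>k\<le>n. (a k + c k) * z ^ k) (\<delta> n) n)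
               \<le> pi * (real n)\<^sup>2 / N n"
proof -
  define A where "A c n = small_value_set (\<lambda>z. \<Sum>k\<le>n. (a k + c k) * z ^ k) (\<delta> n) n" for c n
  define admissible where "admissible c n x \<longleftrightarrow> (\<exists>j<N n. x = of_real (real j * \<delta> n)) \<and>
      measure lborel (A (c(n := x)) n) \<le> pi * (real n)\<^sup>2 / N n" for c n x
  have sum_upd: "(\<Sum>k<n. (a k + (c(n := x)) k) * z ^ k) = (\<Sum>k<n. (a k + c k) * z ^ k)" for c x z
    by (intro sum.cong) auto
  have "\<exists>c. \<forall>n. admissible c n (c n)"
  proof (rule dependent_nat_choice_prefix)
    fix c c' :: "nat \<Rightarrow> complex" and n x
    assume "\<And>k. k < n \<Longrightarrow> c k = c' k" and "admissible c n x"
    moreover have "(\<Sum>k<n. (a k + c k) * z ^ k) = (\<Sum>k<n. (a k + c' k) * z ^ k)" for z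
      using calculation(1) by (intro sum.cong) auto
    ultimately show "admissible c' n x"
      by (simp add: admissible_def A_def lessThan_Suc_atMost[symmetric] sum_upd)
  next
    fix c n
    define q where "q z = (\<Sum>k<n. (a k + c k) * z ^ k) + a n * z ^ n" for z
    have "continuous_on UNIV q"
      unfolding q_def by (intro continuous_intros)
    then obtain j where "j < N n" and
      small: "measure lborel (small_value_set (\<lambda>z. q z + of_real (real j * \<delta> n) * z ^ n) (\<delta> n) n)
                \<le> pi * (real n)\<^sup>2 / N n"
      using ex_shift_measure_small_value_set_le[of q "\<delta> n" "N n" n] assms by auto
    have "A (c(n := of_real (real j * \<delta> n))) n =
          small_value_set (\<lambda>z. q z + of_real (real j * \<delta> n) * z ^ n) (\<delta> n) n"
      by (simp add: A_def q_def lessThan_Suc_atMost[symmetric] sum_upd algebra_simps)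
    with \<open>j < N n\<close> small show "\<exists>x. admissible c n x"
      unfolding admissible_def by auto
  qed
  then obtain c where c: "\<And>n. admissible c n (c n)"
    by blast
  show ?thesis
  proof (rule that)
    show "\<exists>j<N n. c n = of_real (real j * \<delta> n)" for n
      using c[of n] by (simp add: admissible_def)
    show "measure lborel (small_value_set (\<lambda>z. \<Sum>k\<le>n. (a k + c k) * z ^ k) (\<delta> n) n)
            \<le> pi * (real n)\<^sup>2 / N n" for n
      using c[of n] by (simp add: admissible_def A_def)
  qed
qed

text \<open>With \<open>\<delta>\<^sub>n = (n + 1)\<^sup>-\<^sup>6\<close> and \<open>N\<^sub>n = (n + 1)\<^sup>4\<close> shifts, both \<open>N\<^sub>n \<delta>\<^sub>n\<close>
  and \<open>\<pi> n\<^sup>2 / N\<^sub>n\<close> are at most a constant times \<open>(n + 1)\<^sup>-\<^sup>2\<close>.\<close>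

lemma ex_coeffs_summable_bounds:
  fixes a :: "nat \<Rightarrow> complex"
  obtains c where "\<And>n. norm (c n) \<le> 1 / (real n + 1) ^ 2"
    and "\<And>n. measure lborel (small_value_set (\<lambda>z. \<Sum>k\<le>n. (a k + c k) * z ^ k) (1 / (real n + 1) ^ 6) n)
               \<le> pi / (real n + 1) ^ 2"
proof -
  obtain c where c: "\<And>n. \<exists>j<(n + 1) ^ 4. c n = of_real (real j * (1 / (real n + 1) ^ 6))"
    and small: "\<And>n. measure lborel (small_value_set (\<lambda>z. \<Sum>k\<le>n. (a k + c k) * z ^ k) (1 / (real n + 1) ^ 6) n)
                     \<le> pi * (real n)\<^sup>2 / real ((n + 1) ^ 4)"
    by (rule ex_coeffs_measure_small_value_sets_le[of "\<lambda>n. 1 / (real n + 1) ^ 6" "\<lambda>n. (n + 1) ^ 4" a])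
      auto
  show ?thesis
  proof
    fix n
    obtain j where "j < (n + 1) ^ 4" and c_eq: "c n = of_real (real j / (real n + 1) ^ 6)"
      using c[of n] by auto
    then have "real j \<le> (real n + 1) ^ 4"
      using of_nat_le_iff[of j "(n + 1) ^ 4", where 'a = real] by (simp add: add.commute)
    have "norm (c n) = real j / (real n + 1) ^ 6"
      unfolding c_eq norm_of_real by simp
    also have "\<dots> \<le> (real n + 1) ^ 4 / (real n + 1) ^ 6"
      using \<open>real j \<le> (real n + 1) ^ 4\<close> by (intro divide_right_mono) auto
    also have "\<dots> = 1 / (real n + 1) ^ 2"
      by (simp add: field_simps)
    finally show "norm (c n) \<le> 1 / (real n + 1) ^ 2" .
  next
    fix n
    have "pi * (real n)\<^sup>2 / real ((n + 1) ^ 4) \<le> pi * (real n + 1)\<^sup>2 / (real n + 1) ^ 4"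
      by (simp add: add.commute) (intro divide_right_mono mult_left_mono power_mono; simp)
    also have "\<dots> = pi / (real n + 1) ^ 2"
      by (simp add: field_simps power_add[symmetric])
    finally show "measure lborel (small_value_set (\<lambda>z. \<Sum>k\<le>n. (a k + c k) * z ^ k) (1 / (real n + 1) ^ 6) n)
                    \<le> pi / (real n + 1) ^ 2"
      using small[of n] by linarith
  qed
qed

lemma filterlim_at_infinity_eventually_notin_small_value_set:
  assumes "1 < norm z"
    and "eventually (\<lambda>n. z \<notin> small_value_set (p n) (1 / (real n + 1) ^ 6) n) sequentially"
  shows "filterlim (\<lambda>n. p n z) at_infinity sequentially"
proof -
  have "eventually (\<lambda>n. 2 * real n * (real n + 1) ^ 6 < r ^ n) sequentially" if "1 < r" for r :: real
    using that by real_asymp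
  from this[OF \<open>1 < norm z\<close>]
  have "eventually (\<lambda>n. 2 * real n < 1 / (real n + 1) ^ 6 * norm z ^ n) sequentially"
    by eventually_elim (simp add: field_simps)
  moreover have "eventually (\<lambda>n. norm z < real n) sequentially"
    by real_asymp
  ultimately have "eventually (\<lambda>n. real n \<le> norm (p n z)) sequentially"
    using assms(2) by eventually_elim (auto simp: small_value_set_def)
  then show ?thesis
    by (intro filterlim_norm_at_top_imp_at_infinity filterlim_at_top_mono[OF filterlim_real_sequentially])
qed

lemma ex_summable_perturbation_partial_sums_diverge_AE:
  fixes a :: "nat \<Rightarrow> complex"
  obtains c where "summable (\<lambda>k. norm (c k))"
    and "AE z in lborel. 1 < norm z \<longrightarrow>
           filterlim (\<lambda>n. \<Sum>k\<le>n. (a k + c k) * z ^ k) at_infinity sequentially"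
proof -
  obtain c where c_bound: "\<And>n. norm (c n) \<le> 1 / (real n + 1) ^ 2"
    and A_bound: "\<And>n. measure lborel (small_value_set (\<lambda>z. \<Sum>k\<le>n. (a k + c k) * z ^ k) (1 / (real n + 1) ^ 6) n)
                       \<le> pi / (real n + 1) ^ 2"
    using ex_coeffs_summable_bounds by blast
  define A where "A n = small_value_set (\<lambda>z. \<Sum>k\<le>n. (a k + c k) * z ^ k) (1 / (real n + 1) ^ 6) n" for n
  have "summable (\<lambda>n. measure lborel (A n))"
    using A_bound by (intro summable_comparison_test[OF _ summable_mult[OF summable_inverse_Suc_power2, of pi]])
      (auto simp: A_def)
  moreover have "A n \<in> sets lborel" for n
    unfolding A_def by (intro small_value_set_measurable continuous_intros)
  moreover have "emeasure lborel (A n) < \<infinity>" for n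
    unfolding A_def by (rule emeasure_small_value_set_finite)
  ultimately have "AE z in lborel. eventually (\<lambda>n. z \<in> space lborel - A n) sequentially"
    by (intro borel_cantelli_AE1)
  then have "AE z in lborel. 1 < norm z \<longrightarrow>
               filterlim (\<lambda>n. \<Sum>k\<le>n. (a k + c k) * z ^ k) at_infinity sequentially"
    by eventually_elim (auto simp: A_def intro: filterlim_at_infinity_eventually_notin_small_value_set)
  moreover have "summable (\<lambda>k. norm (c k))"
    using c_bound by (intro summable_comparison_test[OF _ summable_inverse_Suc_power2]) auto
  ultimately show ?thesis
    using that by blast
qed

lemma wiener_fun_eq_eval_fps: "wiener_fun c = eval_fps (Abs_fps c)"
  by (simp add: fun_eq_iff wiener_fun_def eval_fps_def)

lemma fps_conv_radius_wiener_coeffs: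
  assumes "c \<in> wiener_coeffs"
  shows "1 \<le> fps_conv_radius (Abs_fps c)"
proof -
  have "summable (\<lambda>n. c n * 1 ^ n)"
    using assms summable_norm_cancel by (simp add: wiener_coeffs_def)
  then show ?thesis
    using conv_radius_geI[of c 1] by (simp add: fps_conv_radius_def one_ereal_def)
qed

lemma holomorphic_on_wiener_fun:
  assumes "c \<in> wiener_coeffs"
  shows "wiener_fun c holomorphic_on ball 0 1"
  unfolding wiener_fun_eq_eval_fps
proof (rule holomorphic_on_eval_fps, rule subsetI)
  fix z :: complex
  assume "z \<in> ball 0 1"
  then have "ereal (norm z) < 1"
    by (simp add: one_ereal_def)
  also have "\<dots> \<le> fps_conv_radius (Abs_fps c)"
    using assms by (rule fps_conv_radius_wiener_coeffs)
  finally have "ereal (norm z) < fps_conv_radius (Abs_fps c)" .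
  then show "z \<in> eball 0 (fps_conv_radius (Abs_fps c))"
    by simp
qed

lemma taylor_coeff_wiener_fun:
  assumes "c \<in> wiener_coeffs"
  shows "taylor_coeff (wiener_fun c) k = c k"
proof -
  have "0 < fps_conv_radius (Abs_fps c)"
    using fps_conv_radius_wiener_coeffs[OF assms] by (rule less_le_trans[rotated]) simp
  from fps_nth_conv_deriv[OF this, of k] show ?thesis
    by (simp add: taylor_coeff_def wiener_fun_eq_eval_fps)
qed

lemma continuous_on_wiener_fun:
  assumes "c \<in> wiener_coeffs"
  shows "continuous_on (cball 0 1) (wiener_fun c)"
proof -
  have partial_sums_lim: "uniform_limit (cball 0 1) (\<lambda>n z. \<Sum>k<n. c k * z ^ k) (wiener_fun c) sequentially"
    unfolding wiener_fun_def
  proof (rule Weierstrass_m_test)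
    show "summable (\<lambda>k. norm (c k))"
      using assms by (simp add: wiener_coeffs_def)
    fix k and z :: complex
    assume "z \<in> cball 0 1"
    then show "norm (c k * z ^ k) \<le> norm (c k)"
      by (simp add: norm_mult norm_power mult_left_le power_le_one)
  qed
  show ?thesis
    by (rule uniform_limit_theorem[OF _ partial_sums_lim]) (auto intro!: always_eventually continuous_intros)
qed

lemma taylor_coeff_add:
  assumes "f holomorphic_on S" and "g holomorphic_on S" and "open S" and "0 \<in> S"
  shows "taylor_coeff (\<lambda>w. f w + g w) k = taylor_coeff f k + taylor_coeff g k"
  using higher_deriv_add[OF assms] by (simp add: taylor_coeff_def add_divide_distrib)

lemma uniform_limit_dilation_cball:
  fixes g :: "'a::{real_normed_vector, heine_borel} \<Rightarrow> 'b::metric_space"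
  assumes "continuous_on (cball 0 1) g" and "r \<longlonglongrightarrow> 1" and "\<And>j. \<bar>r j\<bar> \<le> 1"
  shows "uniform_limit (cball 0 1) (\<lambda>j x. g (r j *\<^sub>R x)) g sequentially"
  unfolding uniform_limit_iff
proof (intro allI impI)
  fix e :: real
  assume "0 < e"
  obtain d where "0 < d"
    and d: "\<And>x y. x \<in> cball 0 1 \<Longrightarrow> y \<in> cball 0 1 \<Longrightarrow> dist y x < d \<Longrightarrow> dist (g y) (g x) < e"
    using compact_uniformly_continuous[OF assms(1) compact_cball] \<open>0 < e\<close>
    unfolding uniformly_continuous_on_def by metis
  from assms(2) \<open>0 < d\<close> have "eventually (\<lambda>j. dist (r j) 1 < d) sequentially"
    by (rule tendstoD)
  then show "eventually (\<lambda>j. \<forall>x\<in>cball 0 1. dist (g (r j *\<^sub>R x)) (g x) < e) sequentially"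
  proof eventually_elim
    case (elim j)
    show ?case
    proof
      fix x :: 'a
      assume x: "x \<in> cball 0 1"
      have "r j *\<^sub>R x - x = (r j - 1) *\<^sub>R x"
        by (simp add: algebra_simps)
      then have "dist (r j *\<^sub>R x) x = \<bar>r j - 1\<bar> * norm x"
        by (simp add: dist_norm)
      also have "\<dots> \<le> dist (r j) 1"
        using x by (simp add: dist_real_def mult_left_le)
      finally have "dist (r j *\<^sub>R x) x < d"
        using elim by simp
      moreover have "r j *\<^sub>R x \<in> cball 0 1"
        using x assms(3)[of j] by (simp add: mult_le_one)
      ultimately show "dist (g (r j *\<^sub>R x)) (g x) < e"
        using d x by blast
    qed
  qed
qed

lemma U_A_add_continuous_on_cball:
  assumes "f \<in> U_A \<rho>" and "g holomorphic_on ball 0 1" and "continuous_on (cball 0 1) g"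
    and "\<rho> \<longlonglongrightarrow> 1" and "\<And>n. \<bar>\<rho> n\<bar> \<le> 1"
  shows "(\<lambda>w. f w + g w) \<in> U_A \<rho>"
  unfolding U_A_def
proof (intro CollectI conjI allI impI)
  show "(\<lambda>w. f w + g w) holomorphic_on ball 0 1"
    using assms(1,2) by (intro holomorphic_on_add) (auto simp: U_A_def)
  fix K :: "complex set" and \<phi> :: "complex \<Rightarrow> complex"
  assume K: "compact K \<and> K \<subseteq> sphere 0 1 \<and> K \<noteq> sphere 0 1 \<and> continuous_on K \<phi>"
  then have "K \<subseteq> cball 0 1"
    using sphere_cball by blast
  with K assms(3) have "continuous_on K (\<lambda>z. \<phi> z - g z)"
    by (intro continuous_intros) (auto intro: continuous_on_subset)
  then obtain n where "strict_mono n"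
    and f_lim: "uniform_limit K (\<lambda>j \<zeta>. f (of_real (\<rho> (n j)) * \<zeta>)) (\<lambda>z. \<phi> z - g z) sequentially"
    using assms(1) K unfolding U_A_def by blast
  have "(\<lambda>j. \<rho> (n j)) \<longlonglongrightarrow> 1"
    using LIMSEQ_subseq_LIMSEQ[OF assms(4) \<open>strict_mono n\<close>] by (simp add: o_def)
  from uniform_limit_dilation_cball[OF assms(3) this assms(5)] \<open>K \<subseteq> cball 0 1\<close>
  have g_lim: "uniform_limit K (\<lambda>j \<zeta>. g (of_real (\<rho> (n j)) * \<zeta>)) g sequentially"
    unfolding scaleR_conv_of_real by (rule uniform_limit_on_subset)
  from uniform_limit_add[OF f_lim g_lim] \<open>strict_mono n\<close>
  show "\<exists>n. strict_mono n \<and>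
          uniform_limit K (\<lambda>j \<zeta>. f (of_real (\<rho> (n j)) * \<zeta>) + g (of_real (\<rho> (n j)) * \<zeta>)) \<phi> sequentially"
    by auto
qed

theorem proposition4p9:
  fixes \<rho> :: "nat \<Rightarrow> real" and f :: "complex \<Rightarrow> complex"
  assumes "incseq \<rho>" and "\<And>n. 0 \<le> \<rho> n \<and> \<rho> n < 1" and "\<rho> \<longlonglongrightarrow> 1"
    and "f \<in> U_A \<rho>"
  shows "\<exists>c \<in> wiener_coeffs.
     (AE z in lborel. z \<notin> cball 0 1 \<longrightarrow>
        filterlim (\<lambda>n. partial_sum (\<lambda>w. f w + wiener_fun c w) n z) at_infinity sequentially)
     \<and> (\<lambda>w. f w + wiener_fun c w) \<in> U_A \<rho>"
proof -
  obtain c where c: "c \<in> wiener_coeffs"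
    and diverge: "AE z in lborel. 1 < norm z \<longrightarrow>
        filterlim (\<lambda>n. \<Sum>k\<le>n. (taylor_coeff f k + c k) * z ^ k) at_infinity sequentially"
    using ex_summable_perturbation_partial_sums_diverge_AE[of "taylor_coeff f"]
    unfolding wiener_coeffs_def by blast
  have "f holomorphic_on ball 0 1"
    using assms(4) by (simp add: U_A_def)
  then have "partial_sum (\<lambda>w. f w + wiener_fun c w) n z = (\<Sum>k\<le>n. (taylor_coeff f k + c k) * z ^ k)"
    for n z
    using taylor_coeff_add[OF _ holomorphic_on_wiener_fun[OF c]] taylor_coeff_wiener_fun[OF c]
    by (simp add: partial_sum_def)
  with diverge have "AE z in lborel. z \<notin> cball 0 1 \<longrightarrow>
      filterlim (\<lambda>n. partial_sum (\<lambda>w. f w + wiener_fun c w) n z) at_infinity sequentially"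
    by (simp add: not_le)
  moreover have "(\<lambda>w. f w + wiener_fun c w) \<in> U_A \<rho>"
  proof (rule U_A_add_continuous_on_cball)
    show "\<bar>\<rho> n\<bar> \<le> 1" for n
      using assms(2)[of n] by simp
  qed (use assms(3,4) c in \<open>auto intro: holomorphic_on_wiener_fun continuous_on_wiener_fun\<close>)
  ultimately show ?thesis
    using c by blast
qed

end
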